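(* For integers $n\ge k\ge1$ let $A_{n,k}=\{(a_1,\dots,a_k)\in\mathbb Z^k:a_1,\dots,a_k\ge1,\ \sum_{i=1}^ka_i=n\}$ and $S_{n,k}=\sum_{(a_1,\dots,a_k)\in A_{n,k}}\prod_{i=1}^k\frac1{a_i}$. Then $$S_{n,k}\le\frac{(3\log(n+1))^{k-1}}{n}\quad\text{for all }n\ge k\ge1.$$ *)

theory Defs
  imports Complex_Main
begin

definition A_set :: "nat \<Rightarrow> nat \<Rightarrow> nat list set" where
  "A_set n k = {as. length as = k \<and> (\<forall>a\<in>set as. a \<ge> 1) \<and> sum_list as = n}"

definition S_sum :: "nat \<Rightarrow> nat \<Rightarrow> real" where
  "S_sum n k = (\<Sum>as\<in>A_set n k. \<Prod>i<k. 1 / real (as ! i))"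

end

theory Submission
  imports Defs "HOL-Analysis.Harmonic_Numbers"
begin

text \<open>Splitting off the first part of a composition gives the recursion
  S(n, k+1) = sum of S(n-a, k) / a over a = 1..n. Inserting the induction hypothesis
  for S(n-a, k) and using log (n-a+1) \<le> log (n+1) leaves the sum of 1/(a(n-a)), which
  by partial fractions is 2 H(n-1) / n for the harmonic numbers H. Finally
  2 H(m) \<le> 3 log (m+2) follows from H(m) \<le> 1 + log m and e^2 \<le> 8.\<close>

lemma finite_A_set: "finite (A_set n k)"
proof (rule finite_subset)
  show "A_set n k \<subseteq> {xs. set xs \<subseteq> {0..n} \<and> length xs = k}"
    unfolding A_set_def using member_le_sum_list by fastforce
  show "finite {xs. set xs \<subseteq> {0..n} \<and> length xs = k}"
    by (rule finite_lists_length_eq) simp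
qed

lemma A_set_0: "0 < k \<Longrightarrow> A_set 0 k = {}"
  unfolding A_set_def by (cases k) (auto simp: sum_list_eq_0_iff length_Suc_conv)

lemma S_sum_0: "0 < k \<Longrightarrow> S_sum 0 k = 0"
  unfolding S_sum_def by (simp add: A_set_0)

lemma A_set_1: "0 < n \<Longrightarrow> A_set n 1 = {[n]}"
  unfolding A_set_def by (auto simp: length_Suc_conv)

lemma S_sum_1: "S_sum n 1 = 1 / real n"
  using A_set_1[of n] by (cases "n = 0") (simp add: S_sum_0, simp add: S_sum_def)

lemma A_set_Suc: "A_set n (Suc k) = (\<lambda>(a, as). a # as) ` (SIGMA a:{1..n}. A_set (n - a) k)"
  unfolding A_set_def by (force simp: length_Suc_conv)

lemma S_sum_Suc: "S_sum n (Suc k) = (\<Sum>a=1..n. S_sum (n - a) k / real a)"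
proof -
  have inj: "inj_on (\<lambda>(a, as). a # as) (SIGMA a:{1..n}. A_set (n - a) k)"
    by (auto simp: inj_on_def)
  have "S_sum n (Suc k) =
      (\<Sum>(a, as)\<in>(SIGMA a:{1..n}. A_set (n - a) k). \<Prod>i<Suc k. 1 / real ((a # as) ! i))"
    unfolding S_sum_def A_set_Suc by (subst sum.reindex[OF inj]) (simp add: o_def case_prod_beta)
  also have "\<dots> = (\<Sum>a=1..n. \<Sum>as\<in>A_set (n - a) k. 1 / real a * (\<Prod>i<k. 1 / real (as ! i)))"
    by (simp add: sum.Sigma[symmetric] finite_A_set prod.lessThan_Suc_shift del: prod.lessThan_Suc)
  finally show ?thesis
    unfolding S_sum_def by (simp add: sum_distrib_left sum_divide_distrib)
qed

lemma harm_le_ln_plus_1: "0 < n \<Longrightarrow> harm n \<le> ln (real n) + 1"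
  using euler_mascheroni_sequence_decreasing[of 1 n] by (simp add: harm_def)

lemma two_harm_le_three_ln: "2 * harm m \<le> 3 * ln (real m + 2)"
proof (cases "m = 0")
  case False
  have "2 * harm m \<le> 3 * ln 2 + 2 * ln (real m)"
    using harm_le_ln_plus_1[of m] ln2_ge_two_thirds False by simp
  also have "\<dots> = ln (8 * real m ^ 2)"
    using False by (simp add: ln_mult ln_realpow flip: ln_realpow[of 2 3, simplified])
  also have "\<dots> \<le> ln ((real m + 2) ^ 3)"
  proof (subst ln_le_cancel_iff)
    have "(real m + 2) ^ 3 = 8 * real m ^ 2 + (real m * (real m - 1) ^ 2 + 11 * real m + 8)"
      by (simp add: power2_eq_square power3_eq_cube algebra_simps)
    then show "8 * real m ^ 2 \<le> (real m + 2) ^ 3"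
      by simp
  qed (use False in auto)
  also have "\<dots> = 3 * ln (real m + 2)"
    by (simp add: ln_realpow)
  finally show ?thesis .
qed (simp add: harm_def)

text \<open>The term \<open>a = n\<close> vanishes because \<open>x / 0 = 0\<close>.\<close>
lemma sum_inverse_mult_complement:
  "(\<Sum>a=1..n. 1 / (real a * real (n - a))) = 2 * harm (n - 1) / real n"
proof -
  have "(\<Sum>a=1..n. 1 / (real a * real (n - a))) = (\<Sum>a=1..n-1. 1 / (real a * real (n - a)))"
    by (cases n) (auto simp: sum.atLeast_Suc_atMost_Suc_shift)
  also have "\<dots> = ((\<Sum>a=1..n-1. 1 / real a) + (\<Sum>a=1..n-1. 1 / real (n - a))) / real n"
    unfolding sum_divide_distrib sum.distrib[symmetric]
    by (rule sum.cong) (auto simp: field_simps of_nat_diff)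
  also have "(\<Sum>a=1..n-1. 1 / real (n - a)) = (\<Sum>a=1..n-1. 1 / real a)"
    by (rule sum.reindex_bij_witness[of _ "\<lambda>a. n - a" "\<lambda>a. n - a"]) auto
  finally show ?thesis
    by (simp add: harm_def inverse_eq_divide)
qed

lemma S_sum_le: "0 < k \<Longrightarrow> S_sum n k \<le> (3 * ln (real n + 1)) ^ (k - 1) / real n"
proof (induction k arbitrary: n rule: nat_induct_non_zero)
  case 1
  show ?case using S_sum_1[of n] by simp
next
  case (Suc k)
  define L where "L = 3 * ln (real n + 1)"
  have "S_sum n (Suc k) = (\<Sum>a=1..n. S_sum (n - a) k / real a)"
    by (rule S_sum_Suc)
  also have "\<dots> \<le> (\<Sum>a=1..n. L ^ (k - 1) / real (n - a) / real a)"
  proof (rule sum_mono, rule divide_right_mono)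
    fix a assume "a \<in> {1..n}"
    then have "(3 * ln (real (n - a) + 1)) ^ (k - 1) \<le> L ^ (k - 1)"
      unfolding L_def by (intro power_mono) auto
    then show "S_sum (n - a) k \<le> L ^ (k - 1) / real (n - a)"
      using Suc.IH[of "n - a"] by (meson divide_right_mono of_nat_0_le_iff order_trans)
  qed simp
  also have "\<dots> = L ^ (k - 1) * (\<Sum>a=1..n. 1 / (real a * real (n - a)))"
    by (simp add: sum_distrib_left mult.commute)
  also have "\<dots> = L ^ (k - 1) * (2 * harm (n - 1) / real n)"
    by (simp only: sum_inverse_mult_complement)
  also have "\<dots> \<le> L ^ (k - 1) * (L / real n)"
  proof (intro mult_left_mono divide_right_mono)
    show "2 * harm (n - 1) \<le> L"
      using two_harm_le_three_ln[of "n - 1"] by (cases n) (simp_all add: L_def harm_def add_ac)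
  qed (simp_all add: L_def)
  also have "\<dots> = L ^ (Suc k - 1) / real n"
    using Suc.hyps by (cases k) auto
  finally show ?case
    unfolding L_def .
qed

theorem lemma9p1:
  fixes n k :: nat
  assumes "1 \<le> k" and "k \<le> n"
  shows "S_sum n k \<le> (3 * ln (real n + 1)) ^ (k - 1) / real n"
  using S_sum_le assms(1) by simp

end
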